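(* Let $v>0$ and consider the system $$\partial_\xi a=r,\qquad \partial_\xi r=-vr-\frac{sa}{2}+\frac{a|r|}{2},\qquad \partial_\xi s=-vs-ra,$$ and the sets $I_1=\{r>0,\ s=2r\}$, $I_2=\{r>0,\ s=-r\}$, $I_3=\{r<0,\ s=r\}$, $I_4=\{r<0,\ s=-2r\}$ in $\mathbb{R}^3$. Consider the condition (H) $(a,r,s)(-\infty)=(a_0,0,0)$ and $(a,r,s)(+\infty)=(0,0,0)$. (i) There is a unique $a_0\in\mathbb{R}$ for which there exists a solution contained in $I_1$ satisfying (H); moreover $a_0=-4v$. (ii) There is a unique $a_0\in\mathbb{R}$ for which there exists a solution contained in $I_4$ satisfying (H); moreover $a_0=4v$. (iii) There is no solution contained in $I_2$ or in $I_3$ satisfying (H). *)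

theory Defs
  imports Complex_Main
begin

definition is_solution :: "real \<Rightarrow> (real \<Rightarrow> real) \<Rightarrow> (real \<Rightarrow> real) \<Rightarrow> (real \<Rightarrow> real) \<Rightarrow> bool" where
  "is_solution v a r s \<longleftrightarrow>
     (\<forall>\<xi>. (a has_real_derivative r \<xi>) (at \<xi>)
        \<and> (r has_real_derivative (- v * r \<xi> - s \<xi> * a \<xi> / 2 + a \<xi> * \<bar>r \<xi>\<bar> / 2)) (at \<xi>)
        \<and> (s has_real_derivative (- v * s \<xi> - r \<xi> * a \<xi>)) (at \<xi>))"

definition I1 :: "(real \<times> real \<times> real) set" where
  "I1 = {(a, r, s). r > 0 \<and> s = 2 * r}"
definition I2 :: "(real \<times> real \<times> real) set" where
  "I2 = {(a, r, s). r > 0 \<and> s = - r}"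
definition I3 :: "(real \<times> real \<times> real) set" where
  "I3 = {(a, r, s). r < 0 \<and> s = r}"
definition I4 :: "(real \<times> real \<times> real) set" where
  "I4 = {(a, r, s). r < 0 \<and> s = - 2 * r}"

definition cond_H :: "real \<Rightarrow> (real \<Rightarrow> real) \<Rightarrow> (real \<Rightarrow> real) \<Rightarrow> (real \<Rightarrow> real) \<Rightarrow> bool" where
  "cond_H a0 a r s \<longleftrightarrow>
     (a \<longlongrightarrow> a0) at_bot \<and> (r \<longlongrightarrow> 0) at_bot \<and> (s \<longlongrightarrow> 0) at_bot \<and>
     (a \<longlongrightarrow> 0) at_top \<and> (r \<longlongrightarrow> 0) at_top \<and> (s \<longlongrightarrow> 0) at_top"

definition contained_in :: "(real \<times> real \<times> real) set \<Rightarrow> (real \<Rightarrow> real) \<Rightarrow> (real \<Rightarrow> real) \<Rightarrow> (real \<Rightarrow> real) \<Rightarrow> bool" where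
  "contained_in I a r s \<longleftrightarrow> (\<forall>\<xi>. (a \<xi>, r \<xi>, s \<xi>) \<in> I)"

end

theory Submission
  imports Defs "HOL-Real_Asymp.Real_Asymp"
begin

(* On a line s = k r along which r has the constant sign \<sigma>, the equation for r reads
   r' = -(v + q a) r with q = (k - \<sigma>)/2. Since a' = r, the quantity r + v a + q a^2/2 is
   conserved, and comparing its limits at both ends gives a0 (v + q a0/2) = 0. As a is strictly
   monotone with the sign of \<sigma>, also \<sigma> a0 < 0, so a0 = -2v/q = 4v/(\<sigma> - k). This value has the
   required sign on I1 and I4 but not on I2 and I3. Conversely, the lines I1 and I4 are invariant,
   and on them the logistic profile a = a0/(1 + exp (v \<xi>)), r = a' is a solution. *)

lemma limit_at_bot_less_limit_at_top_of_deriv_pos: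
  fixes f f' :: "real \<Rightarrow> real"
  assumes deriv: "\<And>x. (f has_real_derivative f' x) (at x)"
    and pos: "\<And>x. f' x > 0"
    and bot: "(f \<longlongrightarrow> l) at_bot" and top: "(f \<longlongrightarrow> u) at_top"
  shows "l < u"
proof -
  have less: "f x < f y" if "x < y" for x y
    using DERIV_pos_imp_increasing[OF that] deriv pos by blast
  have "l \<le> f 0"
    using tendsto_upperbound[OF bot] eventually_le_at_bot[of 0] less
    by (smt (verit) eventually_mono trivial_limit_at_bot_linorder)
  also have "f 0 < f 1"
    using less by simp
  also have "f 1 \<le> u"
    using tendsto_lowerbound[OF top] eventually_ge_at_top[of 1] less
    by (smt (verit) eventually_mono trivial_limit_at_top_linorder)
  finally show ?thesis .
qed

lemma limit_at_bot_eq_limit_at_top_of_deriv_zero: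
  fixes f :: "real \<Rightarrow> real"
  assumes deriv: "\<And>x. (f has_real_derivative 0) (at x)"
    and bot: "(f \<longlongrightarrow> l) at_bot" and top: "(f \<longlongrightarrow> u) at_top"
  shows "l = u"
proof -
  have "f = (\<lambda>_. f 0)"
    using DERIV_isconst_all deriv by blast
  then show ?thesis
    using bot top tendsto_const_iff[OF trivial_limit_at_bot_linorder]
      tendsto_const_iff[OF trivial_limit_at_top_linorder] by metis
qed

lemma first_integral_limits:
  fixes a r :: "real \<Rightarrow> real"
  assumes da: "\<And>x. (a has_real_derivative r x) (at x)"
    and dr: "\<And>x. (r has_real_derivative - (p + q * a x) * r x) (at x)"
    and "(a \<longlongrightarrow> a0) at_bot" "(r \<longlongrightarrow> 0) at_bot"
    and "(a \<longlongrightarrow> a1) at_top" "(r \<longlongrightarrow> 0) at_top"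
  shows "p * a0 + q / 2 * a0\<^sup>2 = p * a1 + q / 2 * a1\<^sup>2"
proof -
  define F where "F x = r x + p * a x + q / 2 * (a x)\<^sup>2" for x
  have "(F has_real_derivative 0) (at x)" for x
  proof -
    have "(F has_real_derivative - (p + q * a x) * r x + p * r x + q / 2 * (2 * a x * r x)) (at x)"
      unfolding F_def by (rule derivative_eq_intros da dr refl | simp)+
    then show ?thesis
      by (simp add: algebra_simps)
  qed
  moreover have "(F \<longlongrightarrow> 0 + p * a0 + q / 2 * a0\<^sup>2) at_bot" "(F \<longlongrightarrow> 0 + p * a1 + q / 2 * a1\<^sup>2) at_top"
    unfolding F_def by (intro tendsto_intros assms)+
  ultimately show ?thesis
    using limit_at_bot_eq_limit_at_top_of_deriv_zero[of F] by simp
qed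

lemma r_equation_on_line:
  fixes a r v k \<sigma> :: real
  assumes "\<bar>\<sigma>\<bar> = 1" "\<sigma> * r > 0"
  shows "- v * r - k * r * a / 2 + a * \<bar>r\<bar> / 2 = - (v + (k - \<sigma>) / 2 * a) * r"
proof -
  have "\<bar>r\<bar> = \<sigma> * r"
    using assms by (smt (verit) mult_cancel_right1 mult_minus_left)
  then show ?thesis
    by (simp add: field_simps)
qed

lemma cond_H_on_line_imp_limit:
  assumes sol: "is_solution v a r s"
    and sign: "\<bar>\<sigma>\<bar> = 1" "\<And>x. \<sigma> * r x > 0"
    and line: "\<And>x. s x = k * r x"
    and "k \<noteq> \<sigma>"
    and H: "cond_H a0 a r s"
  shows "a0 = 4 * v / (\<sigma> - k) \<and> \<sigma> * a0 < 0"
proof -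
  have da: "(a has_real_derivative r x) (at x)" for x
    using sol by (simp add: is_solution_def)
  have "- v * r x - s x * a x / 2 + a x * \<bar>r x\<bar> / 2 = - (v + (k - \<sigma>) / 2 * a x) * r x" for x
    unfolding line using r_equation_on_line[OF sign] .
  then have dr: "(r has_real_derivative - (v + (k - \<sigma>) / 2 * a x) * r x) (at x)" for x
    using sol by (metis is_solution_def)
  have lim: "(a \<longlongrightarrow> a0) at_bot" "(r \<longlongrightarrow> 0) at_bot" "(a \<longlongrightarrow> 0) at_top" "(r \<longlongrightarrow> 0) at_top"
    using H by (simp_all add: cond_H_def)
  have "v * a0 + (k - \<sigma>) / 2 / 2 * a0\<^sup>2 = 0"
    using first_integral_limits[OF da dr lim] by simp
  moreover have "\<sigma> * a0 < \<sigma> * 0"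
  proof (rule limit_at_bot_less_limit_at_top_of_deriv_pos)
    show "((\<lambda>x. \<sigma> * a x) has_real_derivative \<sigma> * r x) (at x)" for x
      using da by (rule DERIV_cmult)
    show "((\<lambda>x. \<sigma> * a x) \<longlongrightarrow> \<sigma> * a0) at_bot"
      using lim(1) by (rule tendsto_mult_left)
    show "((\<lambda>x. \<sigma> * a x) \<longlongrightarrow> \<sigma> * 0) at_top"
      using lim(3) by (rule tendsto_mult_left)
  qed (use sign in auto)
  ultimately have "a0 * (v + (k - \<sigma>) / 4 * a0) = 0" "a0 \<noteq> 0"
    by (auto simp: power2_eq_square algebra_simps)
  then have "v + (k - \<sigma>) / 4 * a0 = 0"
    by simp
  then show ?thesis
    using \<open>k \<noteq> \<sigma>\<close> \<open>\<sigma> * a0 < \<sigma> * 0\<close> by (auto simp: field_simps)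
qed

lemma logistic_has_real_derivative:
  fixes c v :: real
  defines "a \<equiv> \<lambda>x. c / (1 + exp (v * x))"
  shows "(a has_real_derivative v * a x * (a x / c - 1)) (at x)"
proof -
  define e where "e = exp (v * x)"
  have pos: "1 + e > 0"
    unfolding e_def by (smt (verit) exp_gt_zero)
  have "(a has_real_derivative - (c * (e * v)) / (1 + e)\<^sup>2) (at x)"
    unfolding a_def e_def using pos[unfolded e_def]
    by (auto intro!: derivative_eq_intros simp: power2_eq_square)
  moreover have "- (c * (e * v)) / (1 + e)\<^sup>2 = v * a x * (a x / c - 1)"
  proof (cases "c = 0")
    case False
    then have "v * a x * (a x / c - 1) = v * (c / (1 + e)) * (1 / (1 + e) - 1)"
      by (simp add: a_def e_def)
    also have "\<dots> = - (c * (e * v)) / (1 + e)\<^sup>2"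
      using pos by (simp add: field_simps power2_eq_square)
    finally show ?thesis ..
  qed (simp add: a_def)
  ultimately show ?thesis
    by simp
qed

lemma logistic_limits:
  fixes c v :: real
  assumes "v > 0"
  shows "((\<lambda>x. c / (1 + exp (v * x))) \<longlongrightarrow> c) at_bot"
    and "((\<lambda>x. c / (1 + exp (v * x))) \<longlongrightarrow> 0) at_top"
  using assms by real_asymp+

lemma logistic_heteroclinic:
  fixes v a0 :: real
  assumes v: "v > 0" and a0: "a0 \<noteq> 0"
    and a_def: "\<And>x. a x = a0 / (1 + exp (v * x))"
    and r_def: "\<And>x. r x = v * a x * (a x / a0 - 1)"
  shows "(a has_real_derivative r x) (at x)"
    and "(r has_real_derivative - (v - 2 * v / a0 * a x) * r x) (at x)"
    and "a0 * r x < 0"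
    and "(a \<longlongrightarrow> a0) at_bot" "(r \<longlongrightarrow> 0) at_bot"
    and "(a \<longlongrightarrow> 0) at_top" "(r \<longlongrightarrow> 0) at_top"
proof -
  have "a = (\<lambda>x. a0 / (1 + exp (v * x)))"
    using a_def by auto
  then show da: "(a has_real_derivative r x) (at x)" for x
    using logistic_has_real_derivative[of a0 v x] by (simp add: r_def)
  have "((\<lambda>x. v / a0 * (a x)\<^sup>2 - v * a x) has_real_derivative v / a0 * (2 * a x * r x) - v * r x) (at x)"
    using a0 by (auto intro!: derivative_eq_intros da)
  moreover have "(\<lambda>x. v / a0 * (a x)\<^sup>2 - v * a x) = r"
    using a0 by (auto simp: r_def field_simps power2_eq_square)
  moreover have "v / a0 * (2 * a x * r x) - v * r x = - (v - 2 * v / a0 * a x) * r x"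
    by (simp add: algebra_simps)
  ultimately show "(r has_real_derivative - (v - 2 * v / a0 * a x) * r x) (at x)"
    by metis
  have "a0 * a x = a0\<^sup>2 / (1 + exp (v * x))"
    by (simp add: a_def power2_eq_square)
  also have "\<dots> > 0"
    using a0 by (simp add: add_pos_pos)
  finally have "a0 * a x > 0" .
  moreover have "a x / a0 < 1"
    using a0 by (simp add: a_def add_pos_pos)
  moreover have "a0 * r x = v * (a0 * a x) * (a x / a0 - 1)"
    by (simp add: r_def mult_ac)
  ultimately show "a0 * r x < 0"
    using v by (metis diff_less_0_iff_less mult_pos_neg mult_pos_pos)
  show a_bot: "(a \<longlongrightarrow> a0) at_bot" and a_top: "(a \<longlongrightarrow> 0) at_top"
    using logistic_limits[OF v] \<open>a = _\<close> by simp_all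
  have "(r \<longlongrightarrow> v * a0 * (a0 / a0 - 1)) at_bot" "(r \<longlongrightarrow> v * 0 * (0 / a0 - 1)) at_top"
    unfolding r_def by (intro tendsto_intros a_bot a_top; simp add: a0)+
  then show "(r \<longlongrightarrow> 0) at_bot" "(r \<longlongrightarrow> 0) at_top"
    using a0 by simp_all
qed

lemma heteroclinic_on_line_exists:
  assumes v: "v > 0"
    and sign: "\<bar>\<sigma>\<bar> = 1" "\<sigma> * (\<sigma> - k) < 0"
    and invariant: "k * (k - \<sigma>) = 2"
  shows "\<exists>a r. is_solution v a r (\<lambda>x. k * r x) \<and> (\<forall>x. \<sigma> * r x > 0)
    \<and> cond_H (4 * v / (\<sigma> - k)) a r (\<lambda>x. k * r x)"
proof -
  define a0 where "a0 = 4 * v / (\<sigma> - k)"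
  define a where "a x = a0 / (1 + exp (v * x))" for x
  define r where "r x = v * a x * (a x / a0 - 1)" for x
  have "k \<noteq> \<sigma>"
    using sign by auto
  have "\<sigma> / (\<sigma> - k) < 0"
    using sign(2) by (simp add: divide_less_0_iff mult_less_0_iff)
  moreover have "\<sigma> * a0 = 4 * v * (\<sigma> / (\<sigma> - k))"
    by (simp add: a0_def)
  ultimately have "\<sigma> * a0 < 0"
    using v by (metis mult_pos_neg zero_less_mult_iff zero_less_numeral)
  then have "a0 \<noteq> 0"
    by auto
  have "2 * v / a0 = (\<sigma> - k) / 2"
    using v \<open>k \<noteq> \<sigma>\<close> by (simp add: a0_def field_simps)
  note logistic = logistic_heteroclinic[OF v \<open>a0 \<noteq> 0\<close> a_def r_def, unfolded this]
  have r_sign: "\<sigma> * r x > 0" for x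
  proof -
    have "a0\<^sup>2 * (\<sigma> * r x) = (\<sigma> * a0) * (a0 * r x)"
      by (simp add: power2_eq_square mult_ac)
    also have "\<dots> > 0"
      using \<open>\<sigma> * a0 < 0\<close> logistic(3) by (rule mult_neg_neg)
    finally show ?thesis
      using \<open>a0 \<noteq> 0\<close> by (simp add: zero_less_mult_iff)
  qed
  have dr: "(r has_real_derivative - (v + (k - \<sigma>) / 2 * a x) * r x) (at x)" for x
  proof -
    have "- (v - (\<sigma> - k) / 2 * a x) * r x = - (v + (k - \<sigma>) / 2 * a x) * r x"
      by (simp add: field_simps)
    then show ?thesis
      using logistic(2)[of x] by metis
  qed
  have "is_solution v a r (\<lambda>x. k * r x)"
    unfolding is_solution_def
  proof (intro allI conjI logistic(1))
    fix x
    show "(r has_real_derivative - v * r x - k * r x * a x / 2 + a x * \<bar>r x\<bar> / 2) (at x)"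
      unfolding r_equation_on_line[OF sign(1) r_sign] by (rule dr)
    have "k * (- (v + (k - \<sigma>) / 2 * a x) * r x) = - v * (k * r x) - k * (k - \<sigma>) / 2 * r x * a x"
      by (simp add: algebra_simps)
    then show "((\<lambda>x. k * r x) has_real_derivative - v * (k * r x) - r x * a x) (at x)"
      using DERIV_cmult[OF dr[of x], of k] invariant by simp
  qed
  moreover have "cond_H a0 a r (\<lambda>x. k * r x)"
    using logistic(4-7) tendsto_mult_left[of r 0] by (simp add: cond_H_def)
  ultimately show ?thesis
    using r_sign unfolding a0_def by blast
qed

theorem lemma6:
  fixes v :: real
  assumes "v > 0"
  shows "({a0. \<exists>a r s. is_solution v a r s \<and> contained_in I1 a r s \<and> cond_H a0 a r s} = {- 4 * v})
    \<and> ({a0. \<exists>a r s. is_solution v a r s \<and> contained_in I4 a r s \<and> cond_H a0 a r s} = {4 * v})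
    \<and> \<not> (\<exists>a0 a r s. is_solution v a r s \<and> contained_in I2 a r s \<and> cond_H a0 a r s)
    \<and> \<not> (\<exists>a0 a r s. is_solution v a r s \<and> contained_in I3 a r s \<and> cond_H a0 a r s)"
proof -
  have I1: "a0 = - 4 * v" if "is_solution v a r s" "contained_in I1 a r s" "cond_H a0 a r s" for a0 a r s
    using cond_H_on_line_imp_limit[of v a r s 1 2 a0] that by (auto simp: contained_in_def I1_def)
  have I2: False if "is_solution v a r s" "contained_in I2 a r s" "cond_H a0 a r s" for a0 a r s
    using cond_H_on_line_imp_limit[of v a r s 1 "-1" a0] that \<open>v > 0\<close> by (auto simp: contained_in_def I2_def)
  have I3: False if "is_solution v a r s" "contained_in I3 a r s" "cond_H a0 a r s" for a0 a r s
    using cond_H_on_line_imp_limit[of v a r s "-1" 1 a0] that \<open>v > 0\<close> by (auto simp: contained_in_def I3_def)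
  have I4: "a0 = 4 * v" if "is_solution v a r s" "contained_in I4 a r s" "cond_H a0 a r s" for a0 a r s
    using cond_H_on_line_imp_limit[of v a r s "-1" "-2" a0] that by (auto simp: contained_in_def I4_def)
  have "\<exists>a r s. is_solution v a r s \<and> contained_in I1 a r s \<and> cond_H (- 4 * v) a r s"
    using heteroclinic_on_line_exists[OF \<open>v > 0\<close>, of 1 2] by (auto simp: contained_in_def I1_def)
  moreover have "\<exists>a r s. is_solution v a r s \<and> contained_in I4 a r s \<and> cond_H (4 * v) a r s"
    using heteroclinic_on_line_exists[OF \<open>v > 0\<close>, of "-1" "-2"] by (auto simp: contained_in_def I4_def)
  ultimately show ?thesis
    using I1 I2 I3 I4 by blast
qed

end
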